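(* Let $k\ge2$, $1\le m<k$, and alternatives $\ell=1,\dots,k$ with i.i.d. replications (independent across alternatives) whose means are pairwise distinct and ordered $\mu_{\langle 1\rangle}>\dots>\mu_{\langle k\rangle}$, satisfying Assumptions 1–4 of the context. Let $i\in\{1,\dots,m\}$, $j\in\{m+1,\dots,k\}$ and $r_{\langle i\rangle},r_{\langle j\rangle}>0$. Then the function $x\mapsto r_{\langle i\rangle}\Lambda^*_{\langle i\rangle}(x)+r_{\langle j\rangle}\Lambda^*_{\langle j\rangle}(x)$ has a unique infimum (minimizing) point.
   Context: $\bar X_\ell(n)$ is the sample mean of $n$ replications of alternative $\ell$, $\Lambda^{(n)}_\ell(\lambda)=\log\mathbb E[e^{\lambda\bar X_\ell(n)}]$. Assumption 1: $\Lambda_\ell(\lambda)=\lim_{n\to\infty}\frac1n\Lambda^{(n)}_\ell(n\lambda)$ exists as an extended real number for all $\lambda$. With $\mathcal D_{\Lambda_\ell}=\{\lambda:\Lambda_\ell(\lambda)<\infty\}$, interior $\mathcal D^o_{\Lambda_\ell}$, and $\mathcal F_\ell=\{\Lambda'_\ell(\lambda):\lambda\in\mathcal D^o_{\Lambda_\ell}\}$, interior $\mathcal F^o_\ell$: Assumption 2: $0\in\mathcal D^o_{\Lambda_\ell}$. Assumption 3: $\Lambda_\ell$ strictly convex, continuous on $\mathcal D^o_{\Lambda_\ell}$ and steep ($|\Lambda'_\ell(\lambda_n)|\to\infty$ along sequences tending to a boundary point of $\mathcal D^o_{\Lambda_\ell}$). Assumption 4: $[\mu_{\langle k\rangle},\mu_{\langle1\rangle}]\subset\bigcap_\ell\mathcal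 F^o_\ell$. $\Lambda^*_\ell(x)=\sup_\lambda\{\lambda x-\Lambda_\ell(\lambda)\}$. *)

theory Defs
  imports "HOL-Probability.Probability"
begin

definition sample_mean :: "(nat \<Rightarrow> nat \<Rightarrow> 'a \<Rightarrow> real) \<Rightarrow> nat \<Rightarrow> nat \<Rightarrow> 'a \<Rightarrow> real" where
  "sample_mean X l n \<omega> = (\<Sum>t<n. X l t \<omega>) / real n"

definition log_mgf :: "'a measure \<Rightarrow> ('a \<Rightarrow> real) \<Rightarrow> real \<Rightarrow> ereal" where
  "log_mgf M Y lam =
     (let I = (\<integral>\<^sup>+ \<omega>. ennreal (exp (lam * Y \<omega>)) \<partial>M)
      in if I = \<infinity> then \<infinity> else ereal (ln (enn2real I)))"

definition Lambda_n :: "'a measure \<Rightarrow> (nat \<Rightarrow> nat \<Rightarrow> 'a \<Rightarrow> real) \<Rightarrow> nat \<Rightarrow> nat \<Rightarrow> real \<Rightarrow> ereal" where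
  "Lambda_n M X l n lam = log_mgf M (sample_mean X l n) lam"

definition eff_dom :: "(real \<Rightarrow> ereal) \<Rightarrow> real set" where
  "eff_dom L = {lam. L lam < \<infinity>}"

definition strictly_convex_on :: "real set \<Rightarrow> (real \<Rightarrow> real) \<Rightarrow> bool" where
  "strictly_convex_on S f \<longleftrightarrow> convex S \<and>
     (\<forall>x\<in>S. \<forall>y\<in>S. x \<noteq> y \<longrightarrow> (\<forall>u::real. 0 < u \<longrightarrow> u < 1 \<longrightarrow>
        f (u * x + (1 - u) * y) < u * f x + (1 - u) * f y))"

definition steep :: "(real \<Rightarrow> real) \<Rightarrow> real set \<Rightarrow> bool" where
  "steep f S \<longleftrightarrow> (\<forall>s b. (\<forall>n. s n \<in> S) \<longrightarrow> s \<longlonglongrightarrow> b \<longrightarrow> b \<in> frontier S \<longrightarrow>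
        filterlim (\<lambda>n. \<bar>deriv f (s n)\<bar>) at_top sequentially)"

definition legendre :: "(real \<Rightarrow> ereal) \<Rightarrow> real \<Rightarrow> ereal" where
  "legendre L x = (SUP lam. ereal (lam * x) - L lam)"

end

theory Submission
  imports Defs
begin

text \<open>
  Only three properties of each limit \<open>\<Lambda>\<close> are needed, and they pass to it from the
  scaled log-MGFs of the sample means: \<open>\<Lambda>(0) = 0\<close>, \<open>\<Lambda>(\<lambda>) \<ge> \<lambda>\<mu>\<close> (Jensen) and
  convexity (Hoelder), together with differentiability on the interior of the domain.
  Hence \<open>\<Lambda>\<^sup>*\<close> is convex, nonnegative, zero at \<open>\<mu>\<close> and monotone on each side of \<open>\<mu>\<close>;
  at a slope \<open>x = \<Lambda>'(t)\<close> it equals \<open>t x - \<Lambda>(t)\<close>, and it is strictly convex on the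
  set of such slopes because, by Fermat's rule, the supremum defining \<open>\<Lambda>\<^sup>*(x)\<close> is
  attained only at points where \<open>\<Lambda>' = x\<close>.
  The weighted sum \<open>h\<close> of the two transforms is therefore no smaller anywhere than on
  \<open>[\<mu>\<^sub>j, \<mu>\<^sub>i]\<close>, where by Assumption 4 it is finite and continuous, so it attains its
  minimum; a second minimiser would make \<open>h\<close> constant on a segment ending at the first
  one, contradicting strict convexity near it.
  Independence is used only for the measurability of the replications.
\<close>

definition ereal_convex :: "(real \<Rightarrow> ereal) \<Rightarrow> bool" where
  "ereal_convex f \<longleftrightarrow>
     (\<forall>x y u. 0 < u \<longrightarrow> u < 1 \<longrightarrow> f (u * x + (1 - u) * y) \<le> ereal u * f x + ereal (1 - u) * f y)"

definition ereal_strictly_convex_on :: "real set \<Rightarrow> (real \<Rightarrow> ereal) \<Rightarrow> bool" where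
  "ereal_strictly_convex_on S f \<longleftrightarrow>
     (\<forall>x\<in>S. \<forall>y\<in>S. \<forall>u. x \<noteq> y \<longrightarrow> 0 < u \<longrightarrow> u < 1 \<longrightarrow> u * x + (1 - u) * y \<in> S \<longrightarrow>
        f (u * x + (1 - u) * y) < ereal u * f x + ereal (1 - u) * f y)"

lemma ereal_convexD:
  "ereal_convex f \<Longrightarrow> 0 < u \<Longrightarrow> u < 1 \<Longrightarrow> f (u * x + (1 - u) * y) \<le> ereal u * f x + ereal (1 - u) * f y"
  by (simp add: ereal_convex_def)

lemma ereal_convexD_closed:
  assumes "ereal_convex f" "0 \<le> u" "u \<le> 1"
  shows "f ((1 - u) * x + u * y) \<le> ereal (1 - u) * f x + ereal u * f y"
proof -
  consider "u = 0" | "u = 1" | "0 < u" "u < 1"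
    using assms(2,3) by fastforce
  then show ?thesis
  proof cases
    case 3
    then show ?thesis
      using ereal_convexD[OF assms(1), of "1 - u" x y] by simp
  qed (simp_all add: zero_ereal_def[symmetric] one_ereal_def[symmetric])
qed

lemma ereal_strictly_convex_onD:
  assumes "ereal_strictly_convex_on S f" "x \<in> S" "y \<in> S" "x \<noteq> y" "0 < u" "u < 1"
    "u * x + (1 - u) * y \<in> S"
  shows "f (u * x + (1 - u) * y) < ereal u * f x + ereal (1 - u) * f y"
  using assms unfolding ereal_strictly_convex_on_def by blast

lemma ereal_strictly_convex_on_subset:
  "ereal_strictly_convex_on T f \<Longrightarrow> S \<subseteq> T \<Longrightarrow> ereal_strictly_convex_on S f"
  unfolding ereal_strictly_convex_on_def by blast

lemma convex_eff_dom:
  assumes "ereal_convex f"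
  shows "convex (eff_dom f)"
proof (unfold convex_alt, intro ballI allI impI)
  fix x y u :: real
  assume xy: "x \<in> eff_dom f" "y \<in> eff_dom f" and "0 \<le> u \<and> u \<le> 1"
  then have u: "0 \<le> u" "u \<le> 1"
    by auto
  have "ereal (1 - u) * f x + ereal u * f y < \<infinity>"
    using xy u by (cases "f x"; cases "f y") (auto simp: eff_dom_def)
  then have "f ((1 - u) * x + u * y) < \<infinity>"
    by (rule le_less_trans[OF ereal_convexD_closed[OF assms u]])
  then show "(1 - u) *\<^sub>R x + u *\<^sub>R y \<in> eff_dom f"
    by (simp add: eff_dom_def)
qed

lemma convex_on_real_of_ereal:
  assumes f: "ereal_convex f" "\<And>x. f x \<noteq> -\<infinity>" and S: "convex S" "S \<subseteq> eff_dom f"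
  shows "convex_on S (\<lambda>x. real_of_ereal (f x))"
proof (rule convex_onI[OF _ S(1)])
  fix t x y :: real
  assume t: "0 < t" "t < 1" and xy: "x \<in> S" "y \<in> S"
  obtain a b where "f x = ereal a" "f y = ereal b"
    using xy f(2) S(2) by (cases "f x"; cases "f y") (auto simp: eff_dom_def)
  then show "real_of_ereal (f ((1 - t) *\<^sub>R x + t *\<^sub>R y))
      \<le> (1 - t) * real_of_ereal (f x) + t * real_of_ereal (f y)"
    using ereal_convexD_closed[OF f(1), of t x y] t f(2)[of "(1 - t) * x + t * y"]
    by (cases "f ((1 - t) * x + t * y)") auto
qed

lemma continuous_on_real_of_ereal_convex:
  assumes f: "ereal_convex f" "\<And>x. f x \<noteq> -\<infinity>" and W: "open W" "W \<subseteq> eff_dom f"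
  shows "continuous_on W (\<lambda>x. real_of_ereal (f x))"
  unfolding continuous_on_eq_continuous_at[OF W(1)]
proof
  fix x
  assume "x \<in> W"
  then obtain e where e: "0 < e" "ball x e \<subseteq> W"
    using W(1) openE by blast
  have "convex_on (ball x e) (\<lambda>x. real_of_ereal (f x))"
    using e W(2) by (intro convex_on_real_of_ereal f) auto
  then have "continuous_on (ball x e) (\<lambda>x. real_of_ereal (f x))"
    by (rule convex_on_continuous[OF open_ball])
  then show "isCont (\<lambda>x. real_of_ereal (f x)) x"
    using e(1) by (simp add: continuous_on_eq_continuous_at)
qed

lemma ereal_convex_scale:
  assumes f: "ereal_convex f" "\<And>x. f x \<noteq> -\<infinity>" and c: "0 \<le> c"
  shows "ereal_convex (\<lambda>x. ereal c * f (d * x))"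
  unfolding ereal_convex_def
proof (intro allI impI)
  fix a b u :: real
  assume u: "0 < u" "u < 1"
  have "f (d * (u * a + (1 - u) * b)) \<le> ereal u * f (d * a) + ereal (1 - u) * f (d * b)"
    using ereal_convexD[OF f(1) u, of "d * a" "d * b"] by (simp add: algebra_simps)
  then have "ereal c * f (d * (u * a + (1 - u) * b))
      \<le> ereal c * (ereal u * f (d * a) + ereal (1 - u) * f (d * b))"
    using c by (simp add: ereal_mult_left_mono)
  also have "\<dots> = ereal u * (ereal c * f (d * a)) + ereal (1 - u) * (ereal c * f (d * b))"
    using f(2)[of "d * a"] f(2)[of "d * b"] u c
    by (cases "f (d * a)"; cases "f (d * b)") (auto simp: algebra_simps)
  finally show "ereal c * f (d * (u * a + (1 - u) * b))
      \<le> ereal u * (ereal c * f (d * a)) + ereal (1 - u) * (ereal c * f (d * b))" .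
qed

lemma ereal_convex_limit:
  assumes lim: "\<And>x. (\<lambda>n. f n x) \<longlonglongrightarrow> g x" and f: "\<And>n. ereal_convex (f n)"
    and g: "\<And>x. g x \<noteq> -\<infinity>"
  shows "ereal_convex g"
  unfolding ereal_convex_def
proof (intro allI impI)
  fix a b u :: real
  assume u: "0 < u" "u < 1"
  show "g (u * a + (1 - u) * b) \<le> ereal u * g a + ereal (1 - u) * g b"
  proof (cases "g a = \<infinity> \<or> g b = \<infinity>")
    case True
    then have "ereal u * g a + ereal (1 - u) * g b = \<infinity>"
      using u g[of a] g[of b] by (cases "g a"; cases "g b") auto
    then show ?thesis
      by (simp only: ereal_less_eq(1))
  next
    case False
    then have "\<bar>g a\<bar> \<noteq> \<infinity>" "\<bar>g b\<bar> \<noteq> \<infinity>"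
      using g[of a] g[of b] by auto
    then have "(\<lambda>n. ereal u * f n a + ereal (1 - u) * f n b) \<longlonglongrightarrow> ereal u * g a + ereal (1 - u) * g b"
      by (intro tendsto_add_ereal tendsto_cmult_ereal lim) auto
    then show ?thesis
      by (rule LIMSEQ_le[OF lim]) (use ereal_convexD[OF f u] in auto)
  qed
qed

lemma ereal_weighted_sums_swap:
  fixes A B C E :: ereal
  assumes "0 \<le> A" "0 \<le> B" "0 \<le> C" "0 \<le> E" "0 \<le> r" "0 \<le> s" "0 \<le> u" "u \<le> 1"
  shows "ereal r * (ereal u * A + ereal (1 - u) * B) + ereal s * (ereal u * C + ereal (1 - u) * E)
       = ereal u * (ereal r * A + ereal s * C) + ereal (1 - u) * (ereal r * B + ereal s * E)"
  using assms by (simp add: ereal_right_distrib mult_ac add_ac)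

lemma ereal_convex_weighted_sum:
  assumes f: "ereal_convex f" "\<And>x. 0 \<le> f x" and g: "ereal_convex g" "\<And>x. 0 \<le> g x"
    and rs: "0 \<le> r" "0 \<le> s"
  shows "ereal_convex (\<lambda>x. ereal r * f x + ereal s * g x)"
  unfolding ereal_convex_def
proof (intro allI impI)
  fix x y u :: real
  assume u: "0 < u" "u < 1"
  have "ereal r * f (u * x + (1 - u) * y) + ereal s * g (u * x + (1 - u) * y)
      \<le> ereal r * (ereal u * f x + ereal (1 - u) * f y) + ereal s * (ereal u * g x + ereal (1 - u) * g y)"
    using ereal_convexD[OF f(1) u] ereal_convexD[OF g(1) u] rs
    by (intro add_mono ereal_mult_left_mono) auto
  also have "\<dots> = ereal u * (ereal r * f x + ereal s * g x) + ereal (1 - u) * (ereal r * f y + ereal s * g y)"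
    using f(2) g(2) rs u by (intro ereal_weighted_sums_swap) auto
  finally show "ereal r * f (u * x + (1 - u) * y) + ereal s * g (u * x + (1 - u) * y)
      \<le> ereal u * (ereal r * f x + ereal s * g x) + ereal (1 - u) * (ereal r * f y + ereal s * g y)" .
qed

lemma ereal_strictly_convex_on_weighted_sum:
  assumes f: "ereal_strictly_convex_on S f" "\<And>x. 0 \<le> f x"
    and g: "ereal_strictly_convex_on S g" "\<And>x. 0 \<le> g x"
    and rs: "0 < r" "0 < s"
  shows "ereal_strictly_convex_on S (\<lambda>x. ereal r * f x + ereal s * g x)"
  unfolding ereal_strictly_convex_on_def
proof (intro ballI allI impI)
  fix x y u :: real
  assume xy: "x \<in> S" "y \<in> S" "x \<noteq> y" and u: "0 < u" "u < 1" and z: "u * x + (1 - u) * y \<in> S"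
  have "ereal r * f (u * x + (1 - u) * y) + ereal s * g (u * x + (1 - u) * y)
      < ereal r * (ereal u * f x + ereal (1 - u) * f y) + ereal s * (ereal u * g x + ereal (1 - u) * g y)"
    using f(1) g(1) xy u z rs
    by (intro ereal_add_strict_mono2 ereal_mult_strict_left_mono) (auto simp: ereal_strictly_convex_on_def)
  also have "\<dots> = ereal u * (ereal r * f x + ereal s * g x) + ereal (1 - u) * (ereal r * f y + ereal s * g y)"
    using f(2) g(2) rs u by (intro ereal_weighted_sums_swap) auto
  finally show "ereal r * f (u * x + (1 - u) * y) + ereal s * g (u * x + (1 - u) * y)
      < ereal u * (ereal r * f x + ereal s * g x) + ereal (1 - u) * (ereal r * f y + ereal s * g y)" .
qed

lemma ereal_convex_combination_same: "0 < u \<Longrightarrow> u < 1 \<Longrightarrow> ereal u * m + ereal (1 - u) * m = m"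
  by (cases m) (auto simp flip: distrib_right)

text \<open>A second minimiser \<open>y\<close> makes \<open>h\<close> minimal at a point \<open>z \<noteq> x\<^sub>0\<close> of the segment
  from \<open>x\<^sub>0\<close> to \<open>y\<close> close to \<open>x\<^sub>0\<close>, and strict convexity at the midpoint of \<open>x\<^sub>0\<close> and
  \<open>z\<close> then undercuts the minimum.\<close>
lemma ereal_convex_unique_min:
  assumes h: "ereal_convex h" and x0: "\<And>z. h x0 \<le> h z" and y: "\<And>z. h y \<le> h z"
    and W: "open W" "x0 \<in> W" and strict: "ereal_strictly_convex_on W h"
  shows "y = x0"
proof (rule ccontr)
  assume "y \<noteq> x0"
  obtain e where e: "0 < e" "ball x0 e \<subseteq> W"
    using W openE by blast
  define s where "s = min (1 / 2) (e / (2 * \<bar>y - x0\<bar>))"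
  define z where "z = s * y + (1 - s) * x0"
  have s: "0 < s" "s < 1"
    using e(1) \<open>y \<noteq> x0\<close> by (auto simp: s_def)
  have "z - x0 = s * (y - x0)"
    by (simp add: z_def algebra_simps)
  then have "\<bar>z - x0\<bar> = s * \<bar>y - x0\<bar>"
    using s by (simp add: abs_mult)
  also have "\<dots> \<le> e / 2"
    using \<open>y \<noteq> x0\<close> by (simp add: s_def min_def field_simps)
  finally have dist_z: "\<bar>z - x0\<bar> \<le> e / 2" .
  have z_ne: "z \<noteq> x0"
    using s \<open>y \<noteq> x0\<close> by (simp add: z_def algebra_simps)
  have "dist x0 z < e" "dist x0 (1 / 2 * z + (1 - 1 / 2) * x0) < e"
    using dist_z e(1) by (auto simp: dist_real_def abs_if split: if_splits)
  then have z_in: "z \<in> W" and mid_in: "1 / 2 * z + (1 - 1 / 2) * x0 \<in> W"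
    by (meson e(2) mem_ball subsetD)+
  have "h z \<le> ereal s * h y + ereal (1 - s) * h x0"
    unfolding z_def by (rule ereal_convexD[OF h s])
  also have "\<dots> = h x0"
    using antisym[OF x0 y] ereal_convex_combination_same[OF s] by simp
  finally have hz: "h z = h x0"
    using x0 by (simp add: antisym)
  have "h (1 / 2 * z + (1 - 1 / 2) * x0) < ereal (1 / 2) * h z + ereal (1 - 1 / 2) * h x0"
    by (rule ereal_strictly_convex_onD[OF strict z_in W(2) z_ne _ _ mid_in]) simp_all
  also have "\<dots> = h x0"
    using hz ereal_convex_combination_same[of "1 / 2" "h x0"] by simp
  finally show False
    using leD[OF x0] by blast
qed

lemma ex_min_if_dominated_by_compact:
  fixes h :: "'a::topological_space \<Rightarrow> ereal"
  assumes K: "compact K" "K \<noteq> {}" and cont: "continuous_on K (\<lambda>x. real_of_ereal (h x))"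
    and fin: "\<And>x. x \<in> K \<Longrightarrow> \<bar>h x\<bar> \<noteq> \<infinity>" and dominated: "\<And>y. \<exists>c\<in>K. h c \<le> h y"
  shows "\<exists>x\<in>K. \<forall>y. h x \<le> h y"
proof -
  obtain x where x: "x \<in> K" and min: "\<And>c. c \<in> K \<Longrightarrow> real_of_ereal (h x) \<le> real_of_ereal (h c)"
    using continuous_attains_inf[OF K cont] by blast
  have "h x \<le> h y" for y
  proof -
    obtain c where "c \<in> K" "h c \<le> h y"
      using dominated by blast
    moreover have "h x \<le> h c"
      using min[OF \<open>c \<in> K\<close>] fin[OF x] fin[OF \<open>c \<in> K\<close>]
      by (cases "h x"; cases "h c") auto
    ultimately show ?thesis
      by simp
  qed
  then show ?thesis
    using x by blast
qed

lemma log_mgf_neq_MInf: "log_mgf M Y lam \<noteq> -\<infinity>"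
  by (simp add: log_mgf_def Let_def)

lemma log_mgf_eq_ln_integral:
  assumes "integrable M (\<lambda>\<omega>. exp (lam * Y \<omega>))"
  shows "log_mgf M Y lam = ereal (ln (\<integral>\<omega>. exp (lam * Y \<omega>) \<partial>M))"
proof -
  have "(\<integral>\<^sup>+ \<omega>. ennreal (exp (lam * Y \<omega>)) \<partial>M) = ennreal (\<integral>\<omega>. exp (lam * Y \<omega>) \<partial>M)"
    by (rule nn_integral_eq_integral[OF assms]) simp
  then show ?thesis
    by (simp add: log_mgf_def integral_nonneg_AE)
qed

lemma log_mgf_eq_PInf_iff:
  assumes "Y \<in> borel_measurable M"
  shows "log_mgf M Y lam = \<infinity> \<longleftrightarrow> \<not> integrable M (\<lambda>\<omega>. exp (lam * Y \<omega>))"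
proof -
  have "log_mgf M Y lam = \<infinity> \<longleftrightarrow> (\<integral>\<^sup>+ \<omega>. ennreal (exp (lam * Y \<omega>)) \<partial>M) = \<infinity>"
    by (simp add: log_mgf_def Let_def)
  also have "\<dots> \<longleftrightarrow> \<not> integrable M (\<lambda>\<omega>. exp (lam * Y \<omega>))"
    using assms by (simp add: integrable_iff_bounded less_top[symmetric])
  finally show ?thesis .
qed

lemma (in prob_space) log_mgf_zero: "log_mgf M Y 0 = 0"
  by (simp add: log_mgf_eq_ln_integral prob_space zero_ereal_def)

lemma (in prob_space) expectation_exp_pos:
  fixes f :: "'a \<Rightarrow> real"
  assumes "integrable M (\<lambda>\<omega>. exp (f \<omega>))"
  shows "0 < expectation (\<lambda>\<omega>. exp (f \<omega>))"
proof -
  have "\<not> (AE \<omega> in M. exp (f \<omega>) = 0)"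
    by (simp add: AE_False)
  then have "expectation (\<lambda>\<omega>. exp (f \<omega>)) \<noteq> 0"
    using integral_nonneg_eq_0_iff_AE[OF assms] by auto
  then show ?thesis
    by (simp add: integral_nonneg_AE order_less_le)
qed

lemma (in prob_space) log_mgf_ge_mean:
  assumes "integrable M Y"
  shows "ereal (lam * expectation Y) \<le> log_mgf M Y lam"
proof (cases "integrable M (\<lambda>\<omega>. exp (lam * Y \<omega>))")
  case True
  have "exp (expectation (\<lambda>\<omega>. lam * Y \<omega>)) \<le> expectation (\<lambda>\<omega>. exp (lam * Y \<omega>))"
    by (rule jensens_inequality[where I = UNIV]) (use assms True exp_convex in auto)
  then have "lam * expectation Y \<le> ln (expectation (\<lambda>\<omega>. exp (lam * Y \<omega>)))"
    using expectation_exp_pos[OF True] by (simp add: ln_ge_iff)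
  then show ?thesis
    by (simp add: log_mgf_eq_ln_integral[OF True])
next
  case False
  then have "log_mgf M Y lam = \<infinity>"
    using log_mgf_eq_PInf_iff[OF borel_measurable_integrable[OF assms]] by blast
  then show ?thesis
    by simp
qed

lemma exp_weighted_mean_le:
  fixes p q u :: real
  assumes "0 \<le> u" "u \<le> 1"
  shows "exp (u * p + (1 - u) * q) \<le> u * exp p + (1 - u) * exp q"
  using convex_onD[OF exp_convex, of "1 - u" p q] assms by simp

text \<open>Hoelder's inequality for exponential moments, from the convexity of \<open>exp\<close> applied
  after normalising \<open>e\<^sup>a\<^sup>Y\<close> and \<open>e\<^sup>b\<^sup>Y\<close> by their expectations \<open>A\<close> and \<open>B\<close>.\<close>
lemma (in prob_space) exp_moment_log_convex:
  fixes Y :: "'a \<Rightarrow> real" and a b u :: real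
  assumes Y: "Y \<in> borel_measurable M" and int_a: "integrable M (\<lambda>\<omega>. exp (a * Y \<omega>))"
    and int_b: "integrable M (\<lambda>\<omega>. exp (b * Y \<omega>))" and u: "0 < u" "u < 1"
  shows "integrable M (\<lambda>\<omega>. exp ((u * a + (1 - u) * b) * Y \<omega>))"
    and "ln (expectation (\<lambda>\<omega>. exp ((u * a + (1 - u) * b) * Y \<omega>)))
      \<le> u * ln (expectation (\<lambda>\<omega>. exp (a * Y \<omega>))) + (1 - u) * ln (expectation (\<lambda>\<omega>. exp (b * Y \<omega>)))"
proof -
  define A where "A = expectation (\<lambda>\<omega>. exp (a * Y \<omega>))"
  define B where "B = expectation (\<lambda>\<omega>. exp (b * Y \<omega>))"
  have A: "0 < A" and B: "0 < B"
    using expectation_exp_pos[OF int_a] expectation_exp_pos[OF int_b] by (simp_all add: A_def B_def)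
  define K where "K = exp (u * ln A + (1 - u) * ln B)"
  define g where "g \<omega> = K * (u * exp (a * Y \<omega>) / A + (1 - u) * exp (b * Y \<omega>) / B)" for \<omega>
  have bound: "exp ((u * a + (1 - u) * b) * Y \<omega>) \<le> g \<omega>" for \<omega>
  proof -
    have "exp ((u * a + (1 - u) * b) * Y \<omega>)
        = K * exp (u * (a * Y \<omega> - ln A) + (1 - u) * (b * Y \<omega> - ln B))"
      by (simp add: K_def flip: exp_add) (simp add: algebra_simps)
    also have "\<dots> \<le> K * (u * exp (a * Y \<omega> - ln A) + (1 - u) * exp (b * Y \<omega> - ln B))"
      using exp_weighted_mean_le[of u] u by (simp add: K_def)
    also have "\<dots> = g \<omega>"
      using A B by (simp add: g_def exp_diff)
    finally show ?thesis .
  qed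
  have int_g: "integrable M g"
    using int_a int_b by (simp add: g_def[abs_def])
  show int_c: "integrable M (\<lambda>\<omega>. exp ((u * a + (1 - u) * b) * Y \<omega>))"
  proof (rule Bochner_Integration.integrable_bound[OF int_g])
    show "AE \<omega> in M. norm (exp ((u * a + (1 - u) * b) * Y \<omega>)) \<le> norm (g \<omega>)"
      using bound by (auto intro: order_trans[OF _ abs_ge_self])
  qed (use Y in measurable)
  have "expectation (\<lambda>\<omega>. exp ((u * a + (1 - u) * b) * Y \<omega>)) \<le> expectation g"
    using int_c int_g bound by (rule integral_mono)
  also have "expectation g = K"
    using int_a int_b A B by (simp add: g_def[abs_def] A_def[symmetric] B_def[symmetric])
  finally have "ln (expectation (\<lambda>\<omega>. exp ((u * a + (1 - u) * b) * Y \<omega>))) \<le> ln K"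
    using expectation_exp_pos[OF int_c] by simp
  then show "ln (expectation (\<lambda>\<omega>. exp ((u * a + (1 - u) * b) * Y \<omega>))) \<le> u * ln A + (1 - u) * ln B"
    by (simp add: K_def)
qed

lemma (in prob_space) ereal_convex_log_mgf:
  assumes Y: "Y \<in> borel_measurable M"
  shows "ereal_convex (log_mgf M Y)"
  unfolding ereal_convex_def
proof (intro allI impI)
  fix a b u :: real
  assume u: "0 < u" "u < 1"
  show "log_mgf M Y (u * a + (1 - u) * b) \<le> ereal u * log_mgf M Y a + ereal (1 - u) * log_mgf M Y b"
  proof (cases "integrable M (\<lambda>\<omega>. exp (a * Y \<omega>)) \<and> integrable M (\<lambda>\<omega>. exp (b * Y \<omega>))")
    case True
    then show ?thesis
      using exp_moment_log_convex[OF Y _ _ u, of a b]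
      by (simp add: log_mgf_eq_ln_integral)
  next
    case False
    then have "log_mgf M Y a = \<infinity> \<or> log_mgf M Y b = \<infinity>"
      using log_mgf_eq_PInf_iff[OF Y] by blast
    then have "ereal u * log_mgf M Y a + ereal (1 - u) * log_mgf M Y b = \<infinity>"
      using u log_mgf_neq_MInf[of M Y a] log_mgf_neq_MInf[of M Y b]
      by (cases "log_mgf M Y a"; cases "log_mgf M Y b") auto
    then show ?thesis
      by (simp only: ereal_less_eq(1))
  qed
qed

lemma integrable_iff_distr_eq:
  fixes X Y :: "'a \<Rightarrow> real"
  assumes "X \<in> borel_measurable M" "Y \<in> borel_measurable M" "distr M borel X = distr M borel Y"
  shows "integrable M X \<longleftrightarrow> integrable M Y"
  using integrable_distr_eq[of X M borel "\<lambda>x. x"] integrable_distr_eq[of Y M borel "\<lambda>x. x"] assms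
  by simp

lemma integral_eq_if_distr_eq:
  fixes X Y :: "'a \<Rightarrow> real"
  assumes "X \<in> borel_measurable M" "Y \<in> borel_measurable M" "distr M borel X = distr M borel Y"
  shows "integral\<^sup>L M X = integral\<^sup>L M Y"
  using integral_distr[of X M borel "\<lambda>x. x"] integral_distr[of Y M borel "\<lambda>x. x"] assms
  by simp

lemma integrable_sample_mean:
  "(\<And>t. integrable M (X l t)) \<Longrightarrow> integrable M (sample_mean X l n)"
  unfolding sample_mean_def[abs_def] by auto

lemma integral_sample_mean:
  assumes "\<And>t. integrable M (X l t)" "\<And>t. integral\<^sup>L M (X l t) = \<mu>" "0 < n"
  shows "integral\<^sup>L M (sample_mean X l n) = \<mu>"
  using assms unfolding sample_mean_def[abs_def] by (simp add: Bochner_Integration.integral_sum)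

locale limit_lmgf =
  fixes L :: "real \<Rightarrow> ereal" and \<mu> :: real
  assumes at_zero: "L 0 = 0"
    and ge_mean: "\<And>lam. ereal (lam * \<mu>) \<le> L lam"
    and convex: "ereal_convex L"

lemma (in prob_space) limit_lmgf_scaled_log_mgf:
  assumes meas: "\<And>t. X l t \<in> borel_measurable M"
    and ident: "\<And>t. distr M borel (X l t) = distr M borel (X l 0)"
    and integ: "integrable M (X l 0)"
    and lim: "\<And>lam. (\<lambda>n. ereal (1 / real n) * Lambda_n M X l n (real n * lam)) \<longlonglongrightarrow> L lam"
  shows "limit_lmgf L (expectation (X l 0))"
proof
  define \<mu> where "\<mu> = expectation (X l 0)"
  define s where "s n lam = ereal (1 / real n) * Lambda_n M X l n (real n * lam)" for n lam
  have int: "integrable M (X l t)" for t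
    using integ integrable_iff_distr_eq[OF meas meas ident] by blast
  have mean: "expectation (X l t) = \<mu>" for t
    unfolding \<mu>_def by (rule integral_eq_if_distr_eq[OF meas meas ident])
  have "(\<lambda>n. s n 0) \<longlonglongrightarrow> 0"
    by (simp add: s_def Lambda_n_def log_mgf_zero)
  then show "L 0 = 0"
    using lim[of 0] LIMSEQ_unique unfolding s_def by blast
  show ge: "ereal (lam * \<mu>) \<le> L lam" for lam
  proof (rule LIMSEQ_le_const[OF lim], intro exI allI impI)
    fix n :: nat
    assume n: "1 \<le> n"
    have "expectation (sample_mean X l n) = \<mu>"
      using n by (intro integral_sample_mean int mean) simp
    then have "ereal (real n * lam * \<mu>) \<le> Lambda_n M X l n (real n * lam)"
      using log_mgf_ge_mean[OF integrable_sample_mean[where X = X and l = l and n = n, OF int], of "real n * lam"]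
      by (simp add: Lambda_n_def)
    then have "ereal (1 / real n) * ereal (real n * lam * \<mu>) \<le> s n lam"
      unfolding s_def by (rule ereal_mult_left_mono) simp
    then show "ereal (lam * \<mu>) \<le> ereal (1 / real n) * Lambda_n M X l n (real n * lam)"
      using n by (simp add: s_def)
  qed
  show "ereal_convex L"
  proof (rule ereal_convex_limit[OF lim])
    show "ereal_convex (\<lambda>lam. ereal (1 / real n) * Lambda_n M X l n (real n * lam))" for n
      unfolding Lambda_n_def
      using meas by (intro ereal_convex_scale ereal_convex_log_mgf log_mgf_neq_MInf)
        (auto simp: sample_mean_def[abs_def])
    show "L lam \<noteq> -\<infinity>" for lam
      using ge[of lam] by auto
  qed
qed

definition deriv_range :: "(real \<Rightarrow> ereal) \<Rightarrow> real set" where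
  "deriv_range L = deriv (\<lambda>lam. real_of_ereal (L lam)) ` interior (eff_dom L)"

lemma legendre_ge: "ereal (lam * x) - L lam \<le> legendre L x"
  unfolding legendre_def by (rule SUP_upper) simp

lemma ereal_convex_legendre: "ereal_convex (legendre L)"
  unfolding ereal_convex_def
proof (intro allI impI)
  fix x y u :: real
  assume u: "0 < u" "u < 1"
  show "legendre L (u * x + (1 - u) * y) \<le> ereal u * legendre L x + ereal (1 - u) * legendre L y"
    unfolding legendre_def[of L "u * x + (1 - u) * y"]
  proof (rule SUP_least)
    fix lam
    show "ereal (lam * (u * x + (1 - u) * y)) - L lam
        \<le> ereal u * legendre L x + ereal (1 - u) * legendre L y"
    proof (cases "L lam")
      case (real v)
      have "ereal (lam * (u * x + (1 - u) * y)) - L lam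
          = ereal u * ereal (lam * x - v) + ereal (1 - u) * ereal (lam * y - v)"
        using real by (simp add: algebra_simps)
      also have "\<dots> \<le> ereal u * legendre L x + ereal (1 - u) * legendre L y"
        using legendre_ge[of lam x L] legendre_ge[of lam y L] real u
        by (intro add_mono ereal_mult_left_mono) auto
      finally show ?thesis .
    next
      case MInf
      then have "legendre L x = \<infinity>" "legendre L y = \<infinity>"
        using legendre_ge[of lam x L] legendre_ge[of lam y L] by auto
      then show ?thesis
        using u by simp
    qed simp
  qed
qed

context limit_lmgf
begin

lemma L_neq_MInf: "L lam \<noteq> -\<infinity>"
  using ge_mean[of lam] by auto

lemma legendre_nonneg: "0 \<le> legendre L x"
  using legendre_ge[of 0 x L] by (simp add: at_zero zero_ereal_def)

lemma legendre_mean: "legendre L \<mu> = 0"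
proof (rule antisym)
  show "legendre L \<mu> \<le> 0"
    unfolding legendre_def
  proof (rule SUP_least)
    show "ereal (lam * \<mu>) - L lam \<le> 0" for lam
      using ge_mean[of lam] by (cases "L lam") auto
  qed
qed (rule legendre_nonneg)

lemma legendre_le_if_closed_segment:
  assumes "x \<in> closed_segment \<mu> y"
  shows "legendre L x \<le> legendre L y"
proof -
  obtain u where u: "0 \<le> u" "u \<le> 1" and x: "x = (1 - u) * \<mu> + u * y"
    using assms by (auto simp: closed_segment_def)
  have "legendre L x \<le> ereal u * legendre L y"
    using ereal_convexD_closed[OF ereal_convex_legendre[of L] u, of \<mu> y] x by (simp add: legendre_mean)
  also have "\<dots> \<le> legendre L y"
    using u legendre_nonneg[of y] by (cases "legendre L y") (auto simp: mult_left_le_one_le)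
  finally show ?thesis .
qed

end

locale differentiable_limit_lmgf = limit_lmgf +
  assumes differentiable: "(\<lambda>lam. real_of_ereal (L lam)) differentiable_on interior (eff_dom L)"
begin

abbreviation Lr :: "real \<Rightarrow> real" where
  "Lr lam \<equiv> real_of_ereal (L lam)"

abbreviation D :: "real set" where
  "D \<equiv> interior (eff_dom L)"

lemma L_realE:
  assumes "lam \<in> eff_dom L"
  obtains r where "L lam = ereal r"
  using assms L_neq_MInf[of lam] by (cases "L lam") (auto simp: eff_dom_def)

lemma interior_L_realE:
  assumes "lam \<in> D"
  obtains r where "L lam = ereal r"
  using assms interior_subset L_realE by blast

lemma Lr_has_real_derivative: "t \<in> D \<Longrightarrow> (Lr has_real_derivative deriv Lr t) (at t)"
  using differentiable by (simp add: DERIV_deriv_iff_real_differentiable differentiable_on_eq_differentiable_at)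

lemma L_ge_tangent:
  assumes t: "t \<in> D"
  shows "ereal (Lr t + deriv Lr t * (lam - t)) \<le> L lam"
proof (cases "lam \<in> eff_dom L")
  case True
  have dom: "convex (eff_dom L)"
    by (rule convex_eff_dom[OF convex])
  have "convex_on (eff_dom L) Lr"
    by (rule convex_on_real_of_ereal[OF convex L_neq_MInf dom order.refl])
  then have "deriv Lr t * (lam - t) \<le> Lr lam - Lr t"
    by (rule convex_on_imp_above_tangent[OF _ convex_connected[OF dom] t True
          has_field_derivative_at_within[OF Lr_has_real_derivative[OF t]]])
  moreover obtain r where "L lam = ereal r"
    using True by (rule L_realE)
  ultimately show ?thesis
    by simp
next
  case False
  then show ?thesis
    by (simp add: eff_dom_def)
qed

lemma legendre_at_deriv:
  assumes t: "t \<in> D"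
  shows "legendre L (deriv Lr t) = ereal (t * deriv Lr t - Lr t)"
proof (rule antisym)
  show "legendre L (deriv Lr t) \<le> ereal (t * deriv Lr t - Lr t)"
    unfolding legendre_def
  proof (rule SUP_least)
    show "ereal (lam * deriv Lr t) - L lam \<le> ereal (t * deriv Lr t - Lr t)" for lam
      using L_ge_tangent[OF t, of lam] L_neq_MInf[of lam]
      by (cases "L lam") (auto simp: algebra_simps)
  qed
  obtain r where "L t = ereal r"
    using t by (rule interior_L_realE)
  then show "ereal (t * deriv Lr t - Lr t) \<le> legendre L (deriv Lr t)"
    using legendre_ge[of t "deriv Lr t" L] by simp
qed

lemma deriv_eq_if_legendre_attained:
  assumes s: "s \<in> D" and t: "t \<in> D"
    and attained: "ereal (t * deriv Lr s - Lr t) = legendre L (deriv Lr s)"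
  shows "deriv Lr t = deriv Lr s"
proof -
  have max: "y * deriv Lr s - Lr y \<le> t * deriv Lr s - Lr t" if y: "y \<in> D" for y
  proof -
    obtain r where "L y = ereal r"
      using y by (rule interior_L_realE)
    then show ?thesis
      using legendre_ge[of y "deriv Lr s" L] attained[symmetric] by simp
  qed
  obtain e where e: "0 < e" "ball t e \<subseteq> D"
    using t open_interior openE by blast
  have "((\<lambda>y. y * deriv Lr s - Lr y) has_real_derivative deriv Lr s - deriv Lr t) (at t)"
    using Lr_has_real_derivative[OF t] by (auto intro!: derivative_eq_intros)
  then have "deriv Lr s - deriv Lr t = 0"
    by (rule DERIV_local_max[OF _ e(1)]) (use e(2) max in \<open>auto simp: dist_real_def subset_iff\<close>)
  then show ?thesis
    by simp
qed

lemma deriv_range_subset_eff_dom_legendre: "deriv_range L \<subseteq> eff_dom (legendre L)"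
  by (auto simp: deriv_range_def eff_dom_def legendre_at_deriv)

text \<open>With \<open>u x + (1 - u) y = \<Lambda>'(t)\<close>, \<open>\<Lambda>\<^sup>*\<close> there is the same combination of
  \<open>t x - \<Lambda>(t) \<le> \<Lambda>\<^sup>*(x)\<close> and \<open>t y - \<Lambda>(t) \<le> \<Lambda>\<^sup>*(y)\<close>; equality in both would give
  \<open>x = \<Lambda>'(t) = y\<close>.\<close>
lemma legendre_strictly_convex_on_deriv_range:
  "ereal_strictly_convex_on (deriv_range L) (legendre L)"
  unfolding ereal_strictly_convex_on_def
proof (intro ballI allI impI)
  fix x y u :: real
  assume x: "x \<in> deriv_range L" and y: "y \<in> deriv_range L" and "x \<noteq> y"
    and u: "0 < u" "u < 1" and z: "u * x + (1 - u) * y \<in> deriv_range L"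
  obtain s1 s2 t where st: "s1 \<in> D" "s2 \<in> D" "t \<in> D"
    and x: "x = deriv Lr s1" and y: "y = deriv Lr s2" and z: "u * x + (1 - u) * y = deriv Lr t"
    using x y z by (auto simp: deriv_range_def)
  define P where "P s = s * deriv Lr s - Lr s" for s
  have legendre_eq: "legendre L (deriv Lr s) = ereal (P s)" if "s \<in> D" for s
    using legendre_at_deriv[OF that] by (simp add: P_def)
  obtain r where "L t = ereal r"
    using st(3) by (rule interior_L_realE)
  then have le: "t * deriv Lr s - Lr t \<le> P s" if "s \<in> D" for s
    using legendre_ge[of t "deriv Lr s" L] legendre_eq[OF that] by simp
  have "P t = u * (t * x - Lr t) + (1 - u) * (t * y - Lr t)"
    by (simp add: P_def flip: z) (simp add: algebra_simps)
  moreover have "t * x - Lr t \<noteq> P s1 \<or> t * y - Lr t \<noteq> P s2"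
    using deriv_eq_if_legendre_attained[OF st(1,3)] deriv_eq_if_legendre_attained[OF st(2,3)]
      legendre_eq[OF st(1)] legendre_eq[OF st(2)] x y \<open>x \<noteq> y\<close>
    by auto
  moreover have "t * x - Lr t \<le> P s1" "t * y - Lr t \<le> P s2"
    using le[OF st(1)] le[OF st(2)] x y by simp_all
  ultimately have "P t < u * P s1 + (1 - u) * P s2"
    using u by (smt (verit) mult_le_cancel_left_pos)
  then show "legendre L (u * x + (1 - u) * y) < ereal u * legendre L x + ereal (1 - u) * legendre L y"
    using legendre_eq st x y z by simp
qed

end

lemma (in prob_space) differentiable_limit_lmgf_scaled_log_mgf:
  assumes "\<And>t. X l t \<in> borel_measurable M"
    and "\<And>t. distr M borel (X l t) = distr M borel (X l 0)"
    and "integrable M (X l 0)"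
    and "\<And>lam. (\<lambda>n. ereal (1 / real n) * Lambda_n M X l n (real n * lam)) \<longlonglongrightarrow> L lam"
    and "(\<lambda>lam. real_of_ereal (L lam)) differentiable_on interior (eff_dom L)"
  shows "differentiable_limit_lmgf L (expectation (X l 0))"
  using limit_lmgf_scaled_log_mgf[OF assms(1-4)] assms(5)
  by (simp add: differentiable_limit_lmgf_def differentiable_limit_lmgf_axioms_def)

lemma ereal_convex_ex1_min:
  fixes h :: "real \<Rightarrow> ereal"
  assumes convex: "ereal_convex h" and nonneg: "\<And>x. 0 \<le> h x"
    and W: "open W" "W \<subseteq> eff_dom h" "ereal_strictly_convex_on W h"
    and ba: "b \<le> a" "{b..a} \<subseteq> W" and dominated: "\<And>y. \<exists>c\<in>{b..a}. h c \<le> h y"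
  shows "\<exists>!x. \<forall>y. h x \<le> h y"
proof -
  have "h x \<noteq> -\<infinity>" for x
    using nonneg[of x] by auto
  then have cont: "continuous_on W (\<lambda>x. real_of_ereal (h x))"
    by (rule continuous_on_real_of_ereal_convex[OF convex _ W(1,2)])
  have fin: "\<bar>h x\<bar> \<noteq> \<infinity>" if "x \<in> {b..a}" for x
    using that ba(2) W(2) nonneg[of x] by (auto simp: eff_dom_def)
  obtain x0 where x0: "x0 \<in> {b..a}" and min: "\<forall>y. h x0 \<le> h y"
    using ex_min_if_dominated_by_compact[OF _ _ continuous_on_subset[OF cont ba(2)] fin dominated] ba(1)
    by auto
  show ?thesis
  proof (rule ex1I[of _ x0])
    show "y = x0" if "\<forall>z. h y \<le> h z" for y
      by (rule ereal_convex_unique_min[OF convex _ _ W(1) _ W(3)]) (use min that x0 ba(2) in auto)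
  qed (rule min)
qed

lemma legendre_weighted_sum_dominated:
  assumes L1: "limit_lmgf L1 a" and L2: "limit_lmgf L2 b" and ba: "b \<le> a" and r: "0 \<le> r1" "0 \<le> r2"
  shows "\<exists>c\<in>{b..a}. ereal r1 * legendre L1 c + ereal r2 * legendre L2 c
                  \<le> ereal r1 * legendre L1 y + ereal r2 * legendre L2 y"
proof
  define c where "c = max b (min a y)"
  show "c \<in> {b..a}"
    using ba by (auto simp: c_def)
  have "c \<in> closed_segment a y" "c \<in> closed_segment b y"
    using ba by (auto simp: c_def closed_segment_eq_real_ivl)
  then show "ereal r1 * legendre L1 c + ereal r2 * legendre L2 c
      \<le> ereal r1 * legendre L1 y + ereal r2 * legendre L2 y"
    using r by (intro add_mono ereal_mult_left_mono limit_lmgf.legendre_le_if_closed_segment[OF L1]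
        limit_lmgf.legendre_le_if_closed_segment[OF L2]) auto
qed

lemma unique_minimizer_weighted_legendre_sum:
  assumes L1: "differentiable_limit_lmgf L1 a" and L2: "differentiable_limit_lmgf L2 b"
    and ba: "b \<le> a" and range: "{b..a} \<subseteq> interior (deriv_range L1) \<inter> interior (deriv_range L2)"
    and r: "0 < r1" "0 < r2"
  shows "\<exists>!x. \<forall>y. ereal r1 * legendre L1 x + ereal r2 * legendre L2 x
                \<le> ereal r1 * legendre L1 y + ereal r2 * legendre L2 y"
proof -
  interpret L1: differentiable_limit_lmgf L1 a by (rule L1)
  interpret L2: differentiable_limit_lmgf L2 b by (rule L2)
  define W where "W = interior (deriv_range L1) \<inter> interior (deriv_range L2)"
  have W_dom: "W \<subseteq> eff_dom (\<lambda>x. ereal r1 * legendre L1 x + ereal r2 * legendre L2 x)"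
  proof
    fix x
    assume "x \<in> W"
    then have "x \<in> eff_dom (legendre L1)" "x \<in> eff_dom (legendre L2)"
      using L1.deriv_range_subset_eff_dom_legendre L2.deriv_range_subset_eff_dom_legendre interior_subset
      by (auto simp: W_def)
    then show "x \<in> eff_dom (\<lambda>x. ereal r1 * legendre L1 x + ereal r2 * legendre L2 x)"
      using r by (auto simp: eff_dom_def)
  qed
  show ?thesis
  proof (rule ereal_convex_ex1_min[OF _ _ _ W_dom _ ba])
    show "ereal_convex (\<lambda>x. ereal r1 * legendre L1 x + ereal r2 * legendre L2 x)"
      using r by (intro ereal_convex_weighted_sum ereal_convex_legendre L1.legendre_nonneg L2.legendre_nonneg) auto
    show "ereal_strictly_convex_on W (\<lambda>x. ereal r1 * legendre L1 x + ereal r2 * legendre L2 x)"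
      using r interior_subset
      by (intro ereal_strictly_convex_on_weighted_sum L1.legendre_nonneg L2.legendre_nonneg
          ereal_strictly_convex_on_subset[OF L1.legendre_strictly_convex_on_deriv_range]
          ereal_strictly_convex_on_subset[OF L2.legendre_strictly_convex_on_deriv_range])
        (auto simp: W_def)
    show "\<exists>c\<in>{b..a}. ereal r1 * legendre L1 c + ereal r2 * legendre L2 c
        \<le> ereal r1 * legendre L1 y + ereal r2 * legendre L2 y" for y
      using r by (intro legendre_weighted_sum_dominated L1.limit_lmgf_axioms L2.limit_lmgf_axioms ba) auto
  qed (use r range in \<open>auto simp: W_def L1.legendre_nonneg L2.legendre_nonneg\<close>)
qed

theorem lemma2:
  fixes M :: "'a measure"
    and X :: "nat \<Rightarrow> nat \<Rightarrow> 'a \<Rightarrow> real"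
    and Lam :: "nat \<Rightarrow> real \<Rightarrow> ereal"
    and \<mu> :: "nat \<Rightarrow> real"
    and \<sigma> :: "nat \<Rightarrow> nat"
    and k m i j :: nat
    and ri rj :: real
  assumes prob: "prob_space M"
    and indep: "prob_space.indep_vars M (\<lambda>_. borel) (\<lambda>(l, t). X l t) ({1..k} \<times> UNIV)"
    and ident: "\<forall>l\<in>{1..k}. \<forall>t. distr M borel (X l t) = distr M borel (X l 0)"
    and integ: "\<forall>l\<in>{1..k}. integrable M (X l 0)"
    and mean: "\<forall>l\<in>{1..k}. \<mu> l = prob_space.expectation M (X l 0)"
    and k2: "k \<ge> 2" and m: "1 \<le> m" "m < k"
    and sigma: "bij_betw \<sigma> {1..k} {1..k}"
    and order: "\<forall>a\<in>{1..k}. \<forall>b\<in>{1..k}. a < b \<longrightarrow> \<mu> (\<sigma> a) > \<mu> (\<sigma> b)"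
    and A1: "\<forall>l\<in>{1..k}. \<forall>lam. ((\<lambda>n. ereal (1 / real n) * Lambda_n M X l n (real n * lam))
                \<longlongrightarrow> Lam l lam) sequentially"
    and A2: "\<forall>l\<in>{1..k}. 0 \<in> interior (eff_dom (Lam l))"
    and A3_diff: "\<forall>l\<in>{1..k}. (\<lambda>lam. real_of_ereal (Lam l lam)) differentiable_on interior (eff_dom (Lam l))"
    and A3_conv: "\<forall>l\<in>{1..k}. strictly_convex_on (interior (eff_dom (Lam l))) (\<lambda>lam. real_of_ereal (Lam l lam))"
    and A3_cont: "\<forall>l\<in>{1..k}. continuous_on (interior (eff_dom (Lam l))) (\<lambda>lam. real_of_ereal (Lam l lam))"
    and A3_steep: "\<forall>l\<in>{1..k}. steep (\<lambda>lam. real_of_ereal (Lam l lam)) (interior (eff_dom (Lam l)))"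
    and A4: "{\<mu> (\<sigma> k)..\<mu> (\<sigma> 1)} \<subseteq>
               (\<Inter>l\<in>{1..k}. interior ((\<lambda>lam. deriv (\<lambda>lam'. real_of_ereal (Lam l lam')) lam)
                                   ` interior (eff_dom (Lam l))))"
    and i: "i \<in> {1..m}" and j: "j \<in> {m+1..k}"
    and r: "ri > 0" "rj > 0"
  shows "\<exists>!x::real. \<forall>y. ereal ri * legendre (Lam (\<sigma> i)) x + ereal rj * legendre (Lam (\<sigma> j)) x
                        \<le> ereal ri * legendre (Lam (\<sigma> i)) y + ereal rj * legendre (Lam (\<sigma> j)) y"
proof -
  interpret prob_space M
    by (rule prob)
  have lmgf: "differentiable_limit_lmgf (Lam l) (\<mu> l)" if l: "l \<in> {1..k}" for l
  proof -
    have "X l t \<in> borel_measurable M" for t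
      using indep l unfolding indep_vars_def2 by auto
    then have "differentiable_limit_lmgf (Lam l) (expectation (X l 0))"
      using differentiable_limit_lmgf_scaled_log_mgf[where X = X and l = l and L = "Lam l"]
        bspec[OF ident l] bspec[OF integ l] bspec[OF A1 l] bspec[OF A3_diff l]
      by blast
    then show ?thesis
      using bspec[OF mean l] by simp
  qed
  have ij: "i \<in> {1..k}" "j \<in> {1..k}" "i < j"
    using i j m by auto
  have \<sigma>ij: "\<sigma> i \<in> {1..k}" "\<sigma> j \<in> {1..k}"
    using bij_betw_apply[OF sigma] ij(1,2) by blast+
  have mono: "\<mu> (\<sigma> b) \<le> \<mu> (\<sigma> a)" if "a \<in> {1..k}" "b \<in> {1..k}" "a \<le> b" for a b
    using order that by (cases "a = b") (auto intro: less_imp_le)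
  have "{\<mu> (\<sigma> j)..\<mu> (\<sigma> i)} \<subseteq> {\<mu> (\<sigma> k)..\<mu> (\<sigma> 1)}"
    using mono[of 1 i] mono[of j k] ij by auto
  also have "\<dots> \<subseteq> interior (deriv_range (Lam (\<sigma> i))) \<inter> interior (deriv_range (Lam (\<sigma> j)))"
    using A4 \<sigma>ij unfolding deriv_range_def by blast
  finally have range: "{\<mu> (\<sigma> j)..\<mu> (\<sigma> i)}
      \<subseteq> interior (deriv_range (Lam (\<sigma> i))) \<inter> interior (deriv_range (Lam (\<sigma> j)))" .
  show ?thesis
    by (rule unique_minimizer_weighted_legendre_sum[OF lmgf[OF \<sigma>ij(1)] lmgf[OF \<sigma>ij(2)] _ range r])
      (use mono ij in auto)
qed

end
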